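(* Let $Z\in\mathfrak{h}_2$, $A=\mathbb{C}^2/(Z\mathbb{Z}^2+\mathrm{diag}(1,4)\mathbb{Z}^2)$, $L_0$ the polarising line bundle of characteristic $0$ on $A$ with respect to $\mathbb{C}^2=Z\mathbb{R}^2+\mathbb{R}^2$, and $C_A=\{\theta_A=0\}$ where $\theta_A=\theta\begin{bmatrix}3\omega\\0\end{bmatrix}(\cdot,Z)-\theta\begin{bmatrix}\omega\\0\end{bmatrix}(\cdot,Z)$, $\omega=(0,\tfrac14)$. Then $C_A$ is invariant under translation by every element of the subgroup $K(L_0)\cap A[2]$, which is isomorphic to the Klein group $\mathbb{Z}_2\times\mathbb{Z}_2$.
   Context: $K(L_0)$ is the kernel of the isogeny $\phi_{L_0}:A\to\widehat{A}$, $a\mapsto t_a^*L_0\otimes L_0^{-1}$; $A[2]$ is the group of $2$-torsion points. Classical theta functions: $\theta\begin{bmatrix}c_1\\c_2\end{bmatrix}(v,Z)=\sum_{l\in\mathbb{Z}^2}\exp\big(\pi i\,{}^t(l+c_1)Z(l+c_1)+2\pi i\,{}^t(l+c_1)(v+c_2)\big)$. *)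

theory Defs
  imports "HOL-Analysis.Analysis" "HOL-Algebra.Elementary_Groups" "HOL-Algebra.Coset"
begin

definition ImM :: "complex^2^2 \<Rightarrow> real^2^2" where
  "ImM Z = (\<chi> i j. Im (Z $ i $ j))"

definition siegel_h2 :: "complex^2^2 \<Rightarrow> bool" where
  "siegel_h2 Z \<longleftrightarrow> transpose Z = Z \<and>
     (\<forall>x::real^2. x \<noteq> 0 \<longrightarrow> x \<bullet> (ImM Z *v x) > 0)"

definition cvec_of_int :: "int^2 \<Rightarrow> complex^2" where
  "cvec_of_int m = (\<chi> i. of_int (m $ i))"

definition diag14 :: "complex^2^2" where
  "diag14 = (\<chi> i j. if i = j then (if i = 1 then 1 else 4) else 0)"

definition lattice :: "complex^2^2 \<Rightarrow> (complex^2) set" where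
  "lattice Z = {Z *v cvec_of_int m + diag14 *v cvec_of_int n | m n. True}"

definition theta :: "real^2 \<Rightarrow> real^2 \<Rightarrow> complex^2 \<Rightarrow> complex^2^2 \<Rightarrow> complex" where
  "theta c1 c2 v Z = infsum (\<lambda>l::int^2.
     let u = (\<chi> i. complex_of_real (of_int (l $ i) + c1 $ i)) in
     exp (pi * \<i> * (\<Sum>i\<in>UNIV. \<Sum>j\<in>UNIV. u $ i * Z $ i $ j * u $ j)
          + 2 * pi * \<i> * (\<Sum>i\<in>UNIV. u $ i * (v $ i + complex_of_real (c2 $ i))))) UNIV"

definition omega :: "real^2" where
  "omega = vector [0, 1/4]"

definition theta_A :: "complex^2^2 \<Rightarrow> complex^2 \<Rightarrow> complex" where
  "theta_A Z v = theta (3 *\<^sub>R omega) 0 v Z - theta omega 0 v Z"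

text \<open>Hermitian form H(v,w) = v^t (Im Z)^{-1} conj w = first Chern class of L_0 (Appell-Humbert),
  and its imaginary part E, the alternating Riemann form.\<close>
definition hermH :: "complex^2^2 \<Rightarrow> complex^2 \<Rightarrow> complex^2 \<Rightarrow> complex" where
  "hermH Z v w = (\<Sum>i\<in>UNIV. \<Sum>j\<in>UNIV.
      v $ i * complex_of_real (matrix_inv (ImM Z) $ i $ j) * cnj (w $ j))"

definition riemE :: "complex^2^2 \<Rightarrow> complex^2 \<Rightarrow> complex^2 \<Rightarrow> real" where
  "riemE Z v w = Im (hermH Z v w)"

text \<open>Preimage in C^2 of K(L_0) = Lambda(L_0)/Lambda, Lambda(L_0) = {v. E(v, Lambda) \<subseteq> Z}.\<close>
definition K_lift :: "complex^2^2 \<Rightarrow> (complex^2) set" where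
  "K_lift Z = {v. \<forall>w\<in>lattice Z. riemE Z v w \<in> \<int>}"

definition two_torsion_lift :: "complex^2^2 \<Rightarrow> (complex^2) set" where
  "two_torsion_lift Z = {v. v + v \<in> lattice Z}"

definition KA2_group :: "complex^2^2 \<Rightarrow> (complex^2) set monoid" where
  "KA2_group Z = \<lparr>carrier = K_lift Z \<inter> two_torsion_lift Z, mult = (+), one = 0\<rparr> Mod lattice Z"

end

theory Submission
  imports Defs
begin

(* Write points of C^2 as Z a + b with a, b in R^2. The Riemann form is
   E(Z a + b, Z c + d) = a . d - b . c, so the preimage of K(L_0) \<inter> A[2] consists of the points
   with a in Z x (1/2)Z and b in Z x 2Z, the lattice of those with a in Z^2 and b in Z x 4Z, and
   (2 a_2, b_2 / 2) mod 2 identifies the quotient with Z_2 x Z_2.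
   Translation by Z a + b turns theta[c, 0] into theta[c + a, 0] times a nowhere vanishing factor
   which depends on c only through e((c + a) . b); for the above a and b this exponential is the
   same for c = omega and c = 3 omega. Moreover c + a is congruent modulo Z^2 either to c (if a_2 is
   an integer) or to the other member of {omega, 3 omega} (if a_2 is a half-integer), so
   theta_A (v + Z a + b) = +-F(v) theta_A v with F(v) nonzero. *)

definition cvec_of_real :: "real^'n \<Rightarrow> complex^'n" where
  "cvec_of_real x = (\<chi> i. complex_of_real (x $ i))"

definition vec_Re :: "complex^'n \<Rightarrow> real^'n" where
  "vec_Re v = (\<chi> i. Re (v $ i))"

definition vec_Im :: "complex^'n \<Rightarrow> real^'n" where
  "vec_Im v = (\<chi> i. Im (v $ i))"

definition ReM :: "complex^2^2 \<Rightarrow> real^2^2" where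
  "ReM Z = (\<chi> i j. Re (Z $ i $ j))"

definition of_period_coords :: "complex^2^2 \<Rightarrow> real^2 \<Rightarrow> real^2 \<Rightarrow> complex^2" where
  "of_period_coords Z a b = Z *v cvec_of_real a + cvec_of_real b"

lemma cvec_of_real_add: "cvec_of_real (x + y) = cvec_of_real x + cvec_of_real y"
  by (simp add: cvec_of_real_def vec_eq_iff)

lemma vec_Re_add: "vec_Re (v + w) = vec_Re v + vec_Re w"
  and vec_Im_add: "vec_Im (v + w) = vec_Im v + vec_Im w"
  by (simp_all add: vec_Re_def vec_Im_def vec_eq_iff)

lemma vec_Re_cvec_of_real [simp]: "vec_Re (cvec_of_real x) = x"
  and vec_Im_cvec_of_real [simp]: "vec_Im (cvec_of_real x) = 0"
  by (simp_all add: vec_Re_def vec_Im_def cvec_of_real_def vec_eq_iff)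

lemma vec_Re_mult_cvec_of_real: "vec_Re (Z *v cvec_of_real a) = ReM Z *v a"
  and vec_Im_mult_cvec_of_real: "vec_Im (Z *v cvec_of_real a) = ImM Z *v a"
  by (simp_all add: vec_Re_def vec_Im_def cvec_of_real_def vec_eq_iff ReM_def ImM_def
      matrix_vector_mult_def Re_sum Im_sum)

lemma matrix_inv_inverse:
  fixes A :: "'a::field^'n^'n"
  assumes "invertible A"
  shows "matrix_inv A ** A = mat 1" "A ** matrix_inv A = mat 1"
  using someI_ex[OF assms[unfolded invertible_def]]
  by (simp_all add: matrix_inv_def)

lemma siegel_h2_invertible_ImM:
  assumes "siegel_h2 Z"
  shows "invertible (ImM Z)"
proof -
  have "inj ((*v) (ImM Z))"
  proof (rule injI)
    fix x y assume "ImM Z *v x = ImM Z *v y"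
    then have "ImM Z *v (x - y) = 0" by (simp add: matrix_vector_mult_diff_distrib)
    then show "x = y" using assms unfolding siegel_h2_def
      by (metis inner_zero_right less_irrefl right_minus_eq)
  qed
  then show ?thesis
    using matrix_left_invertible_injective invertible_left_inverse by blast
qed

lemma siegel_h2_symmetric:
  assumes "siegel_h2 Z"
  shows "Z $ 1 $ 2 = Z $ 2 $ 1" "transpose (ImM Z) = ImM Z" "transpose (ReM Z) = ReM Z"
proof -
  have "transpose Z $ i $ j = Z $ i $ j" for i j
    using assms by (simp add: siegel_h2_def)
  then have "Z $ i $ j = Z $ j $ i" for i j
    by (simp add: transpose_def)
  then show "Z $ 1 $ 2 = Z $ 2 $ 1" "transpose (ImM Z) = ImM Z" "transpose (ReM Z) = ReM Z"
    by (simp_all add: transpose_def ImM_def ReM_def vec_eq_iff)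
qed

lemma inner_symmetric_matrix:
  fixes A :: "real^'n^'n"
  assumes "transpose A = A"
  shows "(A *v x) \<bullet> y = x \<bullet> (A *v y)"
  by (metis assms dot_lmul_matrix vector_transpose_matrix inner_commute)

lemma riemE_eq:
  "riemE Z v w = vec_Im v \<bullet> (matrix_inv (ImM Z) *v vec_Re w)
               - vec_Re v \<bullet> (matrix_inv (ImM Z) *v vec_Im w)"
  unfolding riemE_def hermH_def vec_Re_def vec_Im_def inner_vec_def matrix_vector_mult_def
  by (simp add: sum_2 algebra_simps)

lemma riemE_of_period_coords:
  assumes "siegel_h2 Z"
  shows "riemE Z (of_period_coords Z a b) (of_period_coords Z c d) = a \<bullet> d - b \<bullet> c"
proof -
  let ?Y = "ImM Z"
  note inv = matrix_inv_inverse[OF siegel_h2_invertible_ImM[OF assms]]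
  note sym = siegel_h2_symmetric[OF assms]
  have "(?Y *v a) \<bullet> (matrix_inv ?Y *v u) = a \<bullet> u" for u
    by (simp add: inner_symmetric_matrix[OF sym(2)] matrix_vector_mul_assoc inv)
  moreover have "matrix_inv ?Y *v (?Y *v c) = c"
    by (simp add: matrix_vector_mul_assoc inv)
  ultimately show ?thesis
    unfolding riemE_eq of_period_coords_def vec_Re_add vec_Im_add
      vec_Re_mult_cvec_of_real vec_Im_mult_cvec_of_real vec_Re_cvec_of_real vec_Im_cvec_of_real
    by (simp add: matrix_vector_right_distrib inner_add_left inner_add_right
        inner_symmetric_matrix[OF sym(3)])
qed

lemma exp_2pi_i_eq_if_diff_Ints:
  assumes "x - y \<in> \<int>"
  shows "exp (2 * pi * \<i> * complex_of_real x) = exp (2 * pi * \<i> * complex_of_real y)"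
proof -
  have "exp (2 * pi * \<i> * complex_of_real x)
      = exp (complex_of_real (2 * (x - y) * pi) * \<i>) * exp (2 * pi * \<i> * complex_of_real y)"
    unfolding mult_exp_exp by (rule arg_cong[where f=exp]) (simp add: algebra_simps)
  then show ?thesis using exp_integer_2pi[OF assms] by simp
qed

definition theta_summand :: "real^2 \<Rightarrow> real^2 \<Rightarrow> complex^2 \<Rightarrow> complex^2^2 \<Rightarrow> int^2 \<Rightarrow> complex" where
  "theta_summand c1 c2 v Z l = (let u = (\<chi> i. complex_of_real (of_int (l $ i) + c1 $ i)) in
     exp (pi * \<i> * (\<Sum>i\<in>UNIV. \<Sum>j\<in>UNIV. u $ i * Z $ i $ j * u $ j)
          + 2 * pi * \<i> * (\<Sum>i\<in>UNIV. u $ i * (v $ i + complex_of_real (c2 $ i)))))"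

lemma theta_eq_infsum_theta_summand: "theta c1 c2 v Z = infsum (theta_summand c1 c2 v Z) UNIV"
  unfolding theta_def theta_summand_def ..

definition theta_automorphy_factor :: "complex^2^2 \<Rightarrow> real^2 \<Rightarrow> complex^2 \<Rightarrow> complex" where
  "theta_automorphy_factor Z a w =
     exp (- (pi * \<i> * (\<Sum>i\<in>UNIV. \<Sum>j\<in>UNIV. of_real (a $ i) * Z $ i $ j * of_real (a $ j))
            + 2 * pi * \<i> * (\<Sum>i\<in>UNIV. of_real (a $ i) * w $ i)))"

lemma theta_char_shift_Ints:
  assumes "\<forall>i. k $ i \<in> \<int>"
  shows "theta (c1 + k) c2 v Z = theta c1 c2 v Z"
proof -
  define m :: "int^2" where "m = (\<chi> i. \<lfloor>k $ i\<rfloor>)"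
  have k: "k $ i = of_int (m $ i)" for i
    using assms by (simp add: m_def)
  have shift: "theta_summand (c1 + k) c2 v Z = (\<lambda>l. theta_summand c1 c2 v Z (l + m))"
    by (simp add: fun_eq_iff theta_summand_def k add_ac)
  have "bij_betw (\<lambda>l. l + m) UNIV UNIV"
    by (rule bij_betwI[where g="\<lambda>l. l - m"]) auto
  then show ?thesis
    unfolding theta_eq_infsum_theta_summand shift by (rule infsum_reindex_bij_betw)
qed

lemma theta_translate_Ints:
  assumes "\<forall>i. b $ i \<in> \<int>"
  shows "theta c1 c2 (v + cvec_of_real b) Z = exp (2 * pi * \<i> * complex_of_real (c1 \<bullet> b)) * theta c1 c2 v Z"
proof -
  have "theta_summand c1 c2 (v + cvec_of_real b) Z l
      = exp (2 * pi * \<i> * complex_of_real (c1 \<bullet> b)) * theta_summand c1 c2 v Z l" for l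
  proof -
    let ?w = "(\<chi> i. of_int (l $ i) + c1 $ i) :: real^2"
    have "?w \<bullet> b - c1 \<bullet> b \<in> \<int>"
      using assms by (simp add: inner_vec_def sum_2 algebra_simps)
    have "theta_summand c1 c2 (v + cvec_of_real b) Z l
        = exp (2 * pi * \<i> * complex_of_real (?w \<bullet> b)) * theta_summand c1 c2 v Z l"
      unfolding theta_summand_def Let_def mult_exp_exp
      by (rule arg_cong[where f=exp]) (simp add: cvec_of_real_def inner_vec_def sum_2 algebra_simps)
    with exp_2pi_i_eq_if_diff_Ints[OF \<open>?w \<bullet> b - c1 \<bullet> b \<in> \<int>\<close>] show ?thesis
      by simp
  qed
  then show ?thesis
    unfolding theta_eq_infsum_theta_summand infsum_cmult_right'[symmetric] by (rule infsum_cong)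
qed

lemma theta_translate_Z:
  assumes "Z $ 1 $ 2 = Z $ 2 $ 1"
  shows "theta c1 c2 (v + Z *v cvec_of_real a) Z
    = theta_automorphy_factor Z a (v + cvec_of_real c2) * theta (c1 + a) c2 v Z"
  unfolding theta_eq_infsum_theta_summand infsum_cmult_right'[symmetric]
  by (rule infsum_cong) (simp add: theta_summand_def theta_automorphy_factor_def sum_2 cvec_of_real_def
      Let_def matrix_vector_mult_def mult_exp_exp algebra_simps assms)

lemma theta_translate_of_period_coords:
  assumes "Z $ 1 $ 2 = Z $ 2 $ 1" "\<forall>i. b $ i \<in> \<int>"
  shows "theta c1 c2 (v + of_period_coords Z a b) Z
    = theta_automorphy_factor Z a (v + cvec_of_real (b + c2))
      * exp (2 * pi * \<i> * complex_of_real ((c1 + a) \<bullet> b)) * theta (c1 + a) c2 v Z"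
proof -
  have translate: "v + of_period_coords Z a b = (v + cvec_of_real b) + Z *v cvec_of_real a"
    by (simp add: of_period_coords_def add_ac)
  show ?thesis
    unfolding translate theta_translate_Z[OF assms(1)] theta_translate_Ints[OF assms(2)]
    by (simp add: cvec_of_real_add add.assoc mult.assoc)
qed

lemma theta_omega_add_half_integer:
  assumes "a $ 1 \<in> \<int>" "a $ 2 - 1/2 \<in> \<int>"
  shows "theta (omega + a) c2 v Z = theta (3 *\<^sub>R omega) c2 v Z"
    and "theta (3 *\<^sub>R omega + a) c2 v Z = theta omega c2 v Z"
proof -
  have "a $ 2 + 1/2 \<in> \<int>"
    using Ints_add[OF assms(2) Ints_1] by (simp add: add_diff_eq add.commute)
  then have Ints: "\<forall>i. (a - 2 *\<^sub>R omega) $ i \<in> \<int>" "\<forall>i. (a + 2 *\<^sub>R omega) $ i \<in> \<int>"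
    using assms by (simp_all add: forall_2 omega_def)
  have shift: "omega + a = 3 *\<^sub>R omega + (a - 2 *\<^sub>R omega)"
    "3 *\<^sub>R omega + a = omega + (a + 2 *\<^sub>R omega)"
    by (simp_all add: vec_eq_iff)
  show "theta (omega + a) c2 v Z = theta (3 *\<^sub>R omega) c2 v Z"
    "theta (3 *\<^sub>R omega + a) c2 v Z = theta omega c2 v Z"
    unfolding shift by (simp_all only: theta_char_shift_Ints[OF Ints(1)] theta_char_shift_Ints[OF Ints(2)])
qed

lemma theta_A_translate_eq_0_iff:
  assumes "siegel_h2 Z"
    and a: "a $ 1 \<in> \<int>" "2 * a $ 2 \<in> \<int>" and b: "b $ 1 \<in> \<int>" "b $ 2 / 2 \<in> \<int>"
  shows "theta_A Z (v + of_period_coords Z a b) = 0 \<longleftrightarrow> theta_A Z v = 0"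
proof -
  have "b $ 2 = 2 * (b $ 2 / 2)" by simp
  then have "b $ 2 \<in> \<int>" using b(2) by (metis Ints_mult Ints_numeral)
  with b(1) have b_Ints: "\<forall>i. b $ i \<in> \<int>" by (simp add: forall_2)
  define F where "F = theta_automorphy_factor Z a (v + cvec_of_real b)
      * exp (2 * pi * \<i> * complex_of_real ((omega + a) \<bullet> b))"
  have "exp (2 * pi * \<i> * complex_of_real ((3 *\<^sub>R omega + a) \<bullet> b))
      = exp (2 * pi * \<i> * complex_of_real ((omega + a) \<bullet> b))"
    by (rule exp_2pi_i_eq_if_diff_Ints)
      (use b(2) in \<open>simp add: omega_def inner_vec_def sum_2 algebra_simps\<close>)
  then have translate: "theta_A Z (v + of_period_coords Z a b)
      = F * (theta (3 *\<^sub>R omega + a) 0 v Z - theta (omega + a) 0 v Z)"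
    unfolding theta_A_def theta_translate_of_period_coords[OF siegel_h2_symmetric(1)[OF assms(1)] b_Ints]
    by (simp add: F_def algebra_simps)
  have "F \<noteq> 0" by (simp add: F_def theta_automorphy_factor_def)
  from a(2) obtain n :: int where "2 * a $ 2 = of_int n" by (metis Ints_cases)
  then consider "a $ 2 \<in> \<int>" | "a $ 2 - 1/2 \<in> \<int>"
    by (cases "even n") (auto elim!: evenE oddE simp: field_simps)
  then show ?thesis
  proof cases
    case 1
    with a(1) have "\<forall>i. a $ i \<in> \<int>" by (simp add: forall_2)
    then have "theta_A Z (v + of_period_coords Z a b) = F * theta_A Z v"
      by (subst translate) (simp add: theta_char_shift_Ints theta_A_def)
    then show ?thesis using \<open>F \<noteq> 0\<close> by simp
  next
    case 2
    from theta_omega_add_half_integer[OF a(1) 2]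
    have "theta_A Z (v + of_period_coords Z a b) = - F * theta_A Z v"
      by (subst translate) (simp add: theta_A_def algebra_simps)
    then show ?thesis using \<open>F \<noteq> 0\<close> by simp
  qed
qed

lemma of_period_coords_add:
  "of_period_coords Z a b + of_period_coords Z c d = of_period_coords Z (a + c) (b + d)"
  by (simp add: of_period_coords_def cvec_of_real_add matrix_vector_right_distrib add_ac)

lemma of_period_coords_uminus: "- of_period_coords Z a b = of_period_coords Z (- a) (- b)"
  by (simp add: of_period_coords_def cvec_of_real_def vec_eq_iff matrix_vector_mult_def sum_negf)

lemma of_period_coords_0: "of_period_coords Z 0 0 = 0"
  by (simp add: of_period_coords_def cvec_of_real_def zero_vec_def matrix_vector_mult_def)

definition KA2_point :: "complex^2^2 \<Rightarrow> int \<Rightarrow> int \<Rightarrow> int \<Rightarrow> int \<Rightarrow> complex^2" where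
  "KA2_point Z p j q k =
     of_period_coords Z (vector [of_int p, of_int j / 2]) (vector [of_int q, 2 * of_int k])"

lemma KA2_point_add:
  "KA2_point Z p j q k + KA2_point Z p' j' q' k' = KA2_point Z (p + p') (j + j') (q + q') (k + k')"
  unfolding KA2_point_def of_period_coords_add
  by (rule arg_cong2[where f="of_period_coords Z"]) (simp_all add: vec_eq_iff forall_2 field_simps)

lemma KA2_point_uminus: "- KA2_point Z p j q k = KA2_point Z (- p) (- j) (- q) (- k)"
  unfolding KA2_point_def of_period_coords_uminus
  by (rule arg_cong2[where f="of_period_coords Z"]) (simp_all add: vec_eq_iff forall_2)

lemma KA2_point_0: "KA2_point Z 0 0 0 0 = 0"
proof -
  have "(vector [0, 0] :: real^2) = 0" by (simp add: vec_eq_iff forall_2)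
  then show ?thesis by (simp add: KA2_point_def of_period_coords_0)
qed

lemma riemE_KA2_point:
  assumes "siegel_h2 Z"
  shows "riemE Z (KA2_point Z p j q k) (KA2_point Z p' j' q' k') = of_int (p * q' + j * k' - q * p' - k * j')"
  unfolding KA2_point_def riemE_of_period_coords[OF assms] by (simp add: inner_vec_def sum_2)

lemma lattice_point_eq_KA2_point:
  "Z *v cvec_of_int m + diag14 *v cvec_of_int n = KA2_point Z (m $ 1) (2 * m $ 2) (n $ 1) (2 * n $ 2)"
  by (simp add: KA2_point_def of_period_coords_def vec_eq_iff forall_2 matrix_vector_mult_def sum_2
      cvec_of_real_def cvec_of_int_def diag14_def)

lemma lattice_eq_KA2_points: "lattice Z = {KA2_point Z p (2 * r) q (2 * s) | p r q s. True}"
proof (rule Set.set_eqI, rule iffI)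
  fix w assume "w \<in> lattice Z"
  then show "w \<in> {KA2_point Z p (2 * r) q (2 * s) | p r q s. True}"
    unfolding lattice_def lattice_point_eq_KA2_point by blast
next
  fix w assume "w \<in> {KA2_point Z p (2 * r) q (2 * s) | p r q s. True}"
  then obtain p r q s where "w = KA2_point Z p (2 * r) q (2 * s)" by blast
  then have "w = Z *v cvec_of_int (vector [p, r]) + diag14 *v cvec_of_int (vector [q, s])"
    unfolding lattice_point_eq_KA2_point by simp
  then show "w \<in> lattice Z" unfolding lattice_def by blast
qed

lemma KA2_point_even_in_lattice: "KA2_point Z p (2 * r) q (2 * s) \<in> lattice Z"
  unfolding lattice_eq_KA2_points by blast

lemma K_lift_Int_two_torsion_lift_eq:
  assumes "siegel_h2 Z"
  shows "K_lift Z \<inter> two_torsion_lift Z = {KA2_point Z p j q k | p j q k. True}"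
proof (rule Set.set_eqI, rule iffI)
  fix t assume t: "t \<in> K_lift Z \<inter> two_torsion_lift Z"
  then obtain p r q s where "t + t = KA2_point Z p (2 * r) q (2 * s)"
    unfolding two_torsion_lift_def lattice_eq_KA2_points by blast
  define a :: "real^2" where "a = vector [of_int p / 2, of_int r / 2]"
  define b :: "real^2" where "b = vector [of_int q / 2, 2 * of_int s]"
  have "of_period_coords Z a b + of_period_coords Z a b = t + t"
    unfolding \<open>t + t = _\<close> of_period_coords_add KA2_point_def a_def b_def
    by (rule arg_cong2[where f="of_period_coords Z"]) (simp_all add: vec_eq_iff forall_2)
  then have "2 *\<^sub>R t = 2 *\<^sub>R of_period_coords Z a b"
    by (simp add: scaleR_2)
  then have t_eq: "t = of_period_coords Z a b"
    by simp
  have "KA2_point Z 0 0 1 0 \<in> lattice Z" "KA2_point Z 1 0 0 0 \<in> lattice Z"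
    using KA2_point_even_in_lattice[of Z 0 0 1 0] KA2_point_even_in_lattice[of Z 1 0 0 0] by simp_all
  then have "riemE Z t (KA2_point Z 0 0 1 0) \<in> \<int>" "riemE Z t (KA2_point Z 1 0 0 0) \<in> \<int>"
    using t unfolding K_lift_def by blast+
  then have "of_int p / 2 \<in> (\<int> :: real set)" "- (of_int q / 2) \<in> (\<int> :: real set)"
    unfolding t_eq KA2_point_def riemE_of_period_coords[OF assms]
    by (simp_all add: a_def b_def inner_vec_def sum_2)
  then obtain p' q' where "of_int p / 2 = (of_int p' :: real)" "of_int q / 2 = (of_int q' :: real)"
    by (metis Ints_cases minus_minus of_int_minus)
  then have "t = KA2_point Z p' r q' s"
    unfolding t_eq KA2_point_def a_def b_def by simp
  then show "t \<in> {KA2_point Z p j q k | p j q k. True}" by blast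
next
  fix t assume "t \<in> {KA2_point Z p j q k | p j q k. True}"
  then obtain p j q k where t: "t = KA2_point Z p j q k" by blast
  have "riemE Z t w \<in> \<int>" if "w \<in> lattice Z" for w
  proof -
    from that obtain p' r q' s where "w = KA2_point Z p' (2 * r) q' (2 * s)"
      unfolding lattice_eq_KA2_points by blast
    then show ?thesis by (simp add: t riemE_KA2_point[OF assms])
  qed
  moreover have "t + t \<in> lattice Z"
    using KA2_point_even_in_lattice[of Z "2 * p" j "2 * q" k] unfolding t KA2_point_add mult_2 .
  ultimately show "t \<in> K_lift Z \<inter> two_torsion_lift Z"
    unfolding K_lift_def two_torsion_lift_def by blast
qed

definition KA2_lift_group :: "complex^2^2 \<Rightarrow> (complex^2) monoid" where
  "KA2_lift_group Z = \<lparr>carrier = K_lift Z \<inter> two_torsion_lift Z, mult = (+), one = 0\<rparr>"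

lemma carrier_KA2_lift_group:
  assumes "siegel_h2 Z"
  shows "t \<in> carrier (KA2_lift_group Z) \<longleftrightarrow> (\<exists>p j q k. t = KA2_point Z p j q k)"
  by (simp add: KA2_lift_group_def K_lift_Int_two_torsion_lift_eq[OF assms])

lemma group_KA2_lift_group:
  assumes "siegel_h2 Z"
  shows "group (KA2_lift_group Z)"
proof (rule groupI)
  fix x y assume "x \<in> carrier (KA2_lift_group Z)" "y \<in> carrier (KA2_lift_group Z)"
  then show "x \<otimes>\<^bsub>KA2_lift_group Z\<^esub> y \<in> carrier (KA2_lift_group Z)"
    unfolding carrier_KA2_lift_group[OF assms] by (simp add: KA2_lift_group_def) (metis KA2_point_add)
next
  show "\<one>\<^bsub>KA2_lift_group Z\<^esub> \<in> carrier (KA2_lift_group Z)"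
    unfolding carrier_KA2_lift_group[OF assms] by (metis KA2_point_0 KA2_lift_group_def monoid.select_convs(2))
next
  fix x assume "x \<in> carrier (KA2_lift_group Z)"
  then have "- x \<in> carrier (KA2_lift_group Z)"
    unfolding carrier_KA2_lift_group[OF assms] by (metis KA2_point_uminus)
  then show "\<exists>y\<in>carrier (KA2_lift_group Z). y \<otimes>\<^bsub>KA2_lift_group Z\<^esub> x = \<one>\<^bsub>KA2_lift_group Z\<^esub>"
    by (intro bexI[of _ "- x"]) (simp_all add: KA2_lift_group_def)
qed (simp_all add: KA2_lift_group_def add.assoc)

(* Pairing with the lattice points KA2_point Z 0 0 0 1 and KA2_point Z 0 1 0 0 returns j and -k
   (riemE_KA2_point), so the index of t does not depend on how t is written as a KA2_point. *)
definition KA2_index :: "complex^2^2 \<Rightarrow> complex^2 \<Rightarrow> int \<times> int" where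
  "KA2_index Z t =
     (\<lfloor>riemE Z t (KA2_point Z 0 0 0 1)\<rfloor> mod 2, \<lfloor>- riemE Z t (KA2_point Z 0 1 0 0)\<rfloor> mod 2)"

lemma KA2_index_KA2_point:
  assumes "siegel_h2 Z"
  shows "KA2_index Z (KA2_point Z p j q k) = (j mod 2, k mod 2)"
  by (simp add: KA2_index_def riemE_KA2_point[OF assms])

lemma KA2_index_hom:
  assumes "siegel_h2 Z"
  shows "group_hom (KA2_lift_group Z) (integer_mod_group 2 \<times>\<times> integer_mod_group 2) (KA2_index Z)"
proof -
  have "KA2_index Z \<in> hom (KA2_lift_group Z) (integer_mod_group 2 \<times>\<times> integer_mod_group 2)"
  proof (rule homI)
    fix x assume "x \<in> carrier (KA2_lift_group Z)"
    then show "KA2_index Z x \<in> carrier (integer_mod_group 2 \<times>\<times> integer_mod_group 2)"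
      unfolding carrier_KA2_lift_group[OF assms]
      by (auto simp: KA2_index_KA2_point[OF assms] carrier_integer_mod_group)
  next
    fix x y assume "x \<in> carrier (KA2_lift_group Z)" "y \<in> carrier (KA2_lift_group Z)"
    then show "KA2_index Z (x \<otimes>\<^bsub>KA2_lift_group Z\<^esub> y)
        = KA2_index Z x \<otimes>\<^bsub>integer_mod_group 2 \<times>\<times> integer_mod_group 2\<^esub> KA2_index Z y"
      unfolding carrier_KA2_lift_group[OF assms]
      by (auto simp: KA2_lift_group_def KA2_point_add KA2_index_KA2_point[OF assms] mod_add_eq)
  qed
  then show ?thesis
    using group_KA2_lift_group[OF assms] DirProd_group[OF group_integer_mod_group group_integer_mod_group]
    by (simp add: group_hom_def group_hom_axioms_def)
qed

lemma KA2_index_image: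
  assumes "siegel_h2 Z"
  shows "KA2_index Z ` carrier (KA2_lift_group Z) = carrier (integer_mod_group 2 \<times>\<times> integer_mod_group 2)"
proof
  show "KA2_index Z ` carrier (KA2_lift_group Z) \<subseteq> carrier (integer_mod_group 2 \<times>\<times> integer_mod_group 2)"
    using group_hom.hom_closed[OF KA2_index_hom[OF assms]] by blast
next
  show "carrier (integer_mod_group 2 \<times>\<times> integer_mod_group 2) \<subseteq> KA2_index Z ` carrier (KA2_lift_group Z)"
  proof
    fix z assume "z \<in> carrier (integer_mod_group 2 \<times>\<times> integer_mod_group 2)"
    then have "z = KA2_index Z (KA2_point Z 0 (fst z) 0 (snd z))"
      by (auto simp: KA2_index_KA2_point[OF assms] carrier_integer_mod_group)
    moreover have "KA2_point Z 0 (fst z) 0 (snd z) \<in> carrier (KA2_lift_group Z)"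
      unfolding carrier_KA2_lift_group[OF assms] by blast
    ultimately show "z \<in> KA2_index Z ` carrier (KA2_lift_group Z)" by blast
  qed
qed

lemma kernel_KA2_index:
  assumes "siegel_h2 Z"
  shows "kernel (KA2_lift_group Z) (integer_mod_group 2 \<times>\<times> integer_mod_group 2) (KA2_index Z) = lattice Z"
proof (rule Set.set_eqI, rule iffI)
  fix t assume "t \<in> kernel (KA2_lift_group Z) (integer_mod_group 2 \<times>\<times> integer_mod_group 2) (KA2_index Z)"
  then have "t \<in> carrier (KA2_lift_group Z)" "KA2_index Z t = (0, 0)"
    by (simp_all add: kernel_def)
  then obtain p j q k where "t = KA2_point Z p j q k" "j mod 2 = 0" "k mod 2 = 0"
    unfolding carrier_KA2_lift_group[OF assms] by (auto simp: KA2_index_KA2_point[OF assms])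
  then show "t \<in> lattice Z"
    by (metis KA2_point_even_in_lattice evenE even_iff_mod_2_eq_zero)
next
  fix t assume "t \<in> lattice Z"
  then obtain p r q s where t: "t = KA2_point Z p (2 * r) q (2 * s)"
    unfolding lattice_eq_KA2_points by blast
  then have "t \<in> carrier (KA2_lift_group Z)"
    unfolding carrier_KA2_lift_group[OF assms] by blast
  then show "t \<in> kernel (KA2_lift_group Z) (integer_mod_group 2 \<times>\<times> integer_mod_group 2) (KA2_index Z)"
    by (simp add: kernel_def t KA2_index_KA2_point[OF assms])
qed

lemma KA2_group_iso_Klein:
  assumes "siegel_h2 Z"
  shows "KA2_group Z \<cong> integer_mod_group 2 \<times>\<times> integer_mod_group 2"
proof -
  have "KA2_lift_group Z Mod lattice Z \<cong> integer_mod_group 2 \<times>\<times> integer_mod_group 2"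
    using group_hom.FactGroup_iso[OF KA2_index_hom[OF assms] KA2_index_image[OF assms]]
    unfolding kernel_KA2_index[OF assms] .
  then show ?thesis
    unfolding KA2_group_def KA2_lift_group_def .
qed

theorem corollary3p5:
  fixes Z :: "complex^2^2"
  assumes "siegel_h2 Z"
  shows "(\<forall>t\<in>K_lift Z \<inter> two_torsion_lift Z. \<forall>v::complex^2.
            theta_A Z (v + t) = 0 \<longleftrightarrow> theta_A Z v = 0)
       \<and> KA2_group Z \<cong> (integer_mod_group 2 \<times>\<times> integer_mod_group 2)"
proof
  show "\<forall>t\<in>K_lift Z \<inter> two_torsion_lift Z. \<forall>v::complex^2.
            theta_A Z (v + t) = 0 \<longleftrightarrow> theta_A Z v = 0"
  proof (intro ballI allI)
    fix t v assume "t \<in> K_lift Z \<inter> two_torsion_lift Z"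
    then obtain p j q k where "t = KA2_point Z p j q k"
      unfolding K_lift_Int_two_torsion_lift_eq[OF assms] by blast
    then show "theta_A Z (v + t) = 0 \<longleftrightarrow> theta_A Z v = 0"
      unfolding KA2_point_def by (simp add: theta_A_translate_eq_0_iff[OF assms])
  qed
  show "KA2_group Z \<cong> (integer_mod_group 2 \<times>\<times> integer_mod_group 2)"
    by (rule KA2_group_iso_Klein[OF assms])
qed

end
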